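(* There exist a probabilistic decision problem $(X,S,\Pr)$ and an \texttt{adp} game $\mathcal{G}$ for it (with suitable strategy sets $\Sigma^p$ of deterministic prover functions $\delta^p:X\to M^p$ and $\Sigma^v$ of convex combinations of deterministic verifier functions $\delta^v:X\times M^p\to\{0,1\}$) such that: there exists a prover strategy $\delta^p\in\Sigma^p$ and verifier strategy $\sigma^v_\star\in\Sigma^v$ for which $\langle\delta^p,\sigma^v_\star\rangle$ is a valid interactive proof system for $S$ with completeness error $\epsilon_c=0$; and yet the property "$\langle\delta^p,\sigma^v\rangle$ is a verifier-leading Stackelberg equilibrium of $\mathcal{G}$" is neither necessary nor sufficient for $\langle\delta^p,\sigma^v\rangle$ to be a valid interactive proof system. That is, there is a valid system in $\Sigma^p\times\Sigma^v$ that is not a verifier-leading Stackelberg equilibrium, and there is a verifier-leading Stackelberg equilibrium that is not a valid system.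
   Context: A probabilistic decision problem is a triple $(X,S,\Pr)$ where $X$ is a set of instances, $S\subseteq X$ and $\Pr$ is a distribution on $X$; the label of $x$ is $y=\mathbf{1}_S(x)\in\{0,1\}$. The \texttt{adp} game: there is one prover $p$ and one verifier $v$, and play is as follows. On input $x\sim\Pr$, the prover sends a single message $m^p=\delta^p(x)\in M^p$, where its strategy is a deterministic function $\delta^p:X\to M^p$. The verifier then outputs a decision in $\{0,1\}$ according to a strategy $\sigma^v$, which is a convex combination (mixture) of deterministic functions $\delta^v:X\times M^p\to\{0,1\}$. We write $\sigma^v(b\mid x,m^p)$ for the probability that the verifier outputs $b$. The losses are $\mathcal{L}^p=-\mathbb{E}_{x\sim\Pr}[\log\sigma^v(1\mid x,\delta^p(x))]$ and $\mathcal{L}^v=-\mathbb{E}_{x\sim\Pr}[\log\sigma^v(y\mid x,\delta^p(x))]$. A verifier-leading Stackelberg equilibrium is a profile $(\delta^p,\sigma^v)$ such that: - $\delta^p$ minimises $\mathcal{L}^p(\cdot,\sigma^v)$ over $\Sigma^p$, and - $\sigma^v$ minimises, over $\Sigma^v$, the worst-case (maximum) verifier loss over the prover's best responses. Validity. A prover–verifier pair $\langle p,v\rangle$ is $(\epsilon_c,\epsilon_s)$-valid for $S$, where $\epsilon_c+\epsilon_s<1$, if both of the following hold. - Completeness: for every $x\in S$, $v$ outputs $1$ when interacting with $p$ with probability at least $1-\epsilon_c$. - Soundness: for every $x\notin S$ and every prover $p'$ in the strategy set, $v$ outputs $0$ when interacting with $p'$ with probability at least $1-\epsilon_s$. The pair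 is "valid" if it is $(\epsilon_c,\epsilon_s)$-valid for some such $\epsilon_c,\epsilon_s$. *)

theory Defs
  imports "HOL-Probability.Probability"
begin

text \<open>
Instances and prover messages are encoded as natural numbers.
A deterministic prover strategy is a function X -> M (type nat => nat, values in M on X).
A verifier strategy is a finite mixture (finitely supported pmf) of deterministic
verifier functions X x M -> {0,1} (type nat => nat => bool).
\<close>

definition prob_decision_problem :: "nat set \<Rightarrow> nat set \<Rightarrow> nat pmf \<Rightarrow> bool" where
  "prob_decision_problem X S Pr \<longleftrightarrow> S \<subseteq> X \<and> set_pmf Pr \<subseteq> X"

definition vprob :: "(nat \<Rightarrow> nat \<Rightarrow> bool) pmf \<Rightarrow> nat \<Rightarrow> nat \<Rightarrow> bool \<Rightarrow> real" where
  "vprob \<sigma> x m b = measure_pmf.prob \<sigma> {d. d x m = b}"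

definition neglog :: "real \<Rightarrow> ennreal" where
  "neglog p = (if p \<le> 0 then \<infinity> else ennreal (- ln p))"

definition loss_p :: "nat pmf \<Rightarrow> (nat \<Rightarrow> nat) \<Rightarrow> (nat \<Rightarrow> nat \<Rightarrow> bool) pmf \<Rightarrow> ennreal" where
  "loss_p Pr \<delta> \<sigma> = (\<integral>\<^sup>+ x. neglog (vprob \<sigma> x (\<delta> x) True) \<partial>measure_pmf Pr)"

definition loss_v :: "nat set \<Rightarrow> nat pmf \<Rightarrow> (nat \<Rightarrow> nat) \<Rightarrow> (nat \<Rightarrow> nat \<Rightarrow> bool) pmf \<Rightarrow> ennreal" where
  "loss_v S Pr \<delta> \<sigma> = (\<integral>\<^sup>+ x. neglog (vprob \<sigma> x (\<delta> x) (x \<in> S)) \<partial>measure_pmf Pr)"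

definition adp_game :: "nat set \<Rightarrow> nat set \<Rightarrow> (nat \<Rightarrow> nat) set \<Rightarrow> (nat \<Rightarrow> nat \<Rightarrow> bool) pmf set \<Rightarrow> bool" where
  "adp_game X M Sp Sv \<longleftrightarrow> Sp \<noteq> {} \<and> Sv \<noteq> {} \<and>
     (\<forall>\<delta>\<in>Sp. \<forall>x\<in>X. \<delta> x \<in> M) \<and> (\<forall>\<sigma>\<in>Sv. finite (set_pmf \<sigma>))"

definition best_responses :: "nat pmf \<Rightarrow> (nat \<Rightarrow> nat) set \<Rightarrow> (nat \<Rightarrow> nat \<Rightarrow> bool) pmf \<Rightarrow> (nat \<Rightarrow> nat) set" where
  "best_responses Pr Sp \<sigma> = {\<delta> \<in> Sp. \<forall>\<delta>'\<in>Sp. loss_p Pr \<delta> \<sigma> \<le> loss_p Pr \<delta>' \<sigma>}"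

definition worst_loss_v :: "nat set \<Rightarrow> nat pmf \<Rightarrow> (nat \<Rightarrow> nat) set \<Rightarrow> (nat \<Rightarrow> nat \<Rightarrow> bool) pmf \<Rightarrow> ennreal" where
  "worst_loss_v S Pr Sp \<sigma> = (SUP \<delta>\<in>best_responses Pr Sp \<sigma>. loss_v S Pr \<delta> \<sigma>)"

definition verifier_leading_SE :: "nat set \<Rightarrow> nat pmf \<Rightarrow> (nat \<Rightarrow> nat) set \<Rightarrow> (nat \<Rightarrow> nat \<Rightarrow> bool) pmf set
     \<Rightarrow> (nat \<Rightarrow> nat) \<Rightarrow> (nat \<Rightarrow> nat \<Rightarrow> bool) pmf \<Rightarrow> bool" where
  "verifier_leading_SE S Pr Sp Sv \<delta> \<sigma> \<longleftrightarrow>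
     \<delta> \<in> Sp \<and> \<sigma> \<in> Sv \<and> \<delta> \<in> best_responses Pr Sp \<sigma> \<and>
     (\<forall>\<sigma>'\<in>Sv. worst_loss_v S Pr Sp \<sigma> \<le> worst_loss_v S Pr Sp \<sigma>')"

definition eps_valid :: "nat set \<Rightarrow> nat set \<Rightarrow> (nat \<Rightarrow> nat) set \<Rightarrow> real \<Rightarrow> real
     \<Rightarrow> (nat \<Rightarrow> nat) \<Rightarrow> (nat \<Rightarrow> nat \<Rightarrow> bool) pmf \<Rightarrow> bool" where
  "eps_valid X S Sp ec es \<delta> \<sigma> \<longleftrightarrow>
     0 \<le> ec \<and> 0 \<le> es \<and> ec + es < 1 \<and>
     (\<forall>x\<in>S. vprob \<sigma> x (\<delta> x) True \<ge> 1 - ec) \<and>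
     (\<forall>x\<in>X - S. \<forall>\<delta>'\<in>Sp. vprob \<sigma> x (\<delta>' x) False \<ge> 1 - es)"

definition valid :: "nat set \<Rightarrow> nat set \<Rightarrow> (nat \<Rightarrow> nat) set
     \<Rightarrow> (nat \<Rightarrow> nat) \<Rightarrow> (nat \<Rightarrow> nat \<Rightarrow> bool) pmf \<Rightarrow> bool" where
  "valid X S Sp \<delta> \<sigma> \<longleftrightarrow> (\<exists>ec es. eps_valid X S Sp ec es \<delta> \<sigma>)"

end

theory Submission
  imports Defs
begin

text \<open>A Stackelberg equilibrium only sees instances of positive probability and only the
prover's best responses, whereas validity quantifies over all instances and all provers.
Take X = {0,1,2}, S = {0}, Pr uniform on {0,1}, and provers sending a constant message 0 or 1.
Every verifier rejects instance 1, so every prover has infinite loss and all provers are best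
responses. A verifier accepting 0 only on message 0 is valid, but its worst best response sends
message 1 and costs infinite loss, while the verifier accepting exactly instance 0 costs nothing.
A verifier that also accepts instance 2 costs nothing as well, hence is an equilibrium, but it
is unsound on 2, which has probability zero.\<close>

lemma vprob_return_pmf: "vprob (return_pmf d) x m b = (if d x m = b then 1 else 0)"
  by (simp add: vprob_def indicator_def)

lemma neglog_1 [simp]: "neglog 1 = 0"
  by (simp add: neglog_def)

lemma neglog_0 [simp]: "neglog 0 = \<infinity>"
  by (simp add: neglog_def)

lemma nn_integral_neglog_infinite:
  assumes "x \<in> set_pmf Pr" and "p x = 0"
  shows "(\<integral>\<^sup>+ y. neglog (p y) \<partial>measure_pmf Pr) = \<infinity>"
proof -
  have "\<infinity> * ennreal (pmf Pr x) = (\<integral>\<^sup>+ y. neglog (p y) * indicator {x} y \<partial>measure_pmf Pr)"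
    using assms(2) by (simp add: emeasure_pmf_single)
  also have "\<dots> \<le> (\<integral>\<^sup>+ y. neglog (p y) \<partial>measure_pmf Pr)"
    by (intro nn_integral_mono) (simp add: indicator_def)
  finally show ?thesis
    using assms(1) by (simp add: set_pmf_iff ennreal_mult_top top_unique)
qed

lemma loss_p_infinite_if_sure_rejection:
  "x \<in> set_pmf Pr \<Longrightarrow> vprob \<sigma> x (\<delta> x) True = 0 \<Longrightarrow> loss_p Pr \<delta> \<sigma> = \<infinity>"
  unfolding loss_p_def by (rule nn_integral_neglog_infinite)

lemma loss_v_infinite_if_sure_error:
  "x \<in> set_pmf Pr \<Longrightarrow> vprob \<sigma> x (\<delta> x) (x \<in> S) = 0 \<Longrightarrow> loss_v S Pr \<delta> \<sigma> = \<infinity>"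
  unfolding loss_v_def by (rule nn_integral_neglog_infinite[where p = "\<lambda>y. vprob \<sigma> y (\<delta> y) (y \<in> S)"])

lemma loss_v_zero_if_sure_correct:
  assumes "\<And>x. x \<in> set_pmf Pr \<Longrightarrow> vprob \<sigma> x (\<delta> x) (x \<in> S) = 1"
  shows "loss_v S Pr \<delta> \<sigma> = 0"
proof -
  have "loss_v S Pr \<delta> \<sigma> = (\<integral>\<^sup>+ x. 0 \<partial>measure_pmf Pr)"
    unfolding loss_v_def using assms by (intro nn_integral_cong_AE) (simp add: AE_measure_pmf_iff)
  then show ?thesis
    by simp
qed

lemma best_responses_eq_if_loss_p_infinite:
  assumes "\<And>\<delta>. \<delta> \<in> Sp \<Longrightarrow> loss_p Pr \<delta> \<sigma> = \<infinity>"
  shows "best_responses Pr Sp \<sigma> = Sp"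
  using assms by (auto simp: best_responses_def)

lemma loss_v_le_worst_loss_v:
  "\<delta> \<in> best_responses Pr Sp \<sigma> \<Longrightarrow> loss_v S Pr \<delta> \<sigma> \<le> worst_loss_v S Pr Sp \<sigma>"
  unfolding worst_loss_v_def by (rule SUP_upper)

lemma worst_loss_v_eq_0:
  "(\<And>\<delta>. \<delta> \<in> best_responses Pr Sp \<sigma> \<Longrightarrow> loss_v S Pr \<delta> \<sigma> = 0) \<Longrightarrow> worst_loss_v S Pr Sp \<sigma> = 0"
  unfolding worst_loss_v_def by (cases "best_responses Pr Sp \<sigma> = {}") (simp_all add: bot_ennreal)

lemma verifier_leading_SE_if_worst_loss_v_0:
  assumes "\<delta> \<in> best_responses Pr Sp \<sigma>" and "\<sigma> \<in> Sv" and "worst_loss_v S Pr Sp \<sigma> = 0"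
  shows "verifier_leading_SE S Pr Sp Sv \<delta> \<sigma>"
  using assms by (simp add: verifier_leading_SE_def best_responses_def)

lemma not_verifier_leading_SE_if_better_verifier:
  assumes "\<sigma>' \<in> Sv" and "worst_loss_v S Pr Sp \<sigma>' < worst_loss_v S Pr Sp \<sigma>"
  shows "\<not> verifier_leading_SE S Pr Sp Sv \<delta> \<sigma>"
  using assms by (auto simp: verifier_leading_SE_def not_le[symmetric])

definition uniform_01 :: "nat pmf" where
  "uniform_01 = pmf_of_set {0, 1}"

definition constant_provers :: "(nat \<Rightarrow> nat) set" where
  "constant_provers = {\<lambda>x. 0, \<lambda>x. 1}"

definition accept_message_0 :: "nat \<Rightarrow> nat \<Rightarrow> bool" where
  "accept_message_0 x m \<longleftrightarrow> x = 0 \<and> m = 0"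

definition accept_instance_0 :: "nat \<Rightarrow> nat \<Rightarrow> bool" where
  "accept_instance_0 x m \<longleftrightarrow> x = 0"

definition accept_instances_0_2 :: "nat \<Rightarrow> nat \<Rightarrow> bool" where
  "accept_instances_0_2 x m \<longleftrightarrow> x = 0 \<or> x = 2"

definition example_verifiers :: "(nat \<Rightarrow> nat \<Rightarrow> bool) pmf set" where
  "example_verifiers =
     {return_pmf accept_message_0, return_pmf accept_instance_0, return_pmf accept_instances_0_2}"

lemma set_pmf_uniform_01: "set_pmf uniform_01 = {0, 1}"
  by (simp add: uniform_01_def)

lemma best_responses_example:
  assumes "\<sigma> \<in> example_verifiers"
  shows "best_responses uniform_01 constant_provers \<sigma> = constant_provers"
proof (rule best_responses_eq_if_loss_p_infinite)
  fix \<delta> :: "nat \<Rightarrow> nat"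
  have "vprob \<sigma> 1 (\<delta> 1) True = 0"
    using assms by (auto simp: example_verifiers_def vprob_return_pmf accept_message_0_def
        accept_instance_0_def accept_instances_0_2_def)
  then show "loss_p uniform_01 \<delta> \<sigma> = \<infinity>"
    by (intro loss_p_infinite_if_sure_rejection) (simp_all add: set_pmf_uniform_01)
qed

lemma worst_loss_v_accept_message_0:
  "worst_loss_v {0} uniform_01 constant_provers (return_pmf accept_message_0) = \<infinity>"
proof -
  have "loss_v {0} uniform_01 (\<lambda>x. 1) (return_pmf accept_message_0) = \<infinity>"
    by (intro loss_v_infinite_if_sure_error[of 0])
      (simp_all add: set_pmf_uniform_01 vprob_return_pmf accept_message_0_def)
  moreover have "loss_v {0} uniform_01 (\<lambda>x. 1) (return_pmf accept_message_0)
      \<le> worst_loss_v {0} uniform_01 constant_provers (return_pmf accept_message_0)"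
    using best_responses_example[of "return_pmf accept_message_0"]
    by (intro loss_v_le_worst_loss_v) (simp_all add: example_verifiers_def constant_provers_def)
  ultimately show ?thesis
    by (simp add: top_unique)
qed

lemma worst_loss_v_example_eq_0:
  assumes "\<sigma> \<in> example_verifiers"
    and "\<And>\<delta> x. x \<in> {0, 1} \<Longrightarrow> vprob \<sigma> x (\<delta> x) (x \<in> {0}) = 1"
  shows "worst_loss_v {0} uniform_01 constant_provers \<sigma> = 0"
  using assms by (intro worst_loss_v_eq_0 loss_v_zero_if_sure_correct) (simp add: set_pmf_uniform_01)

theorem proposition1:
  shows "\<exists>X S Pr M Sp Sv.
     prob_decision_problem X S Pr \<and> adp_game X M Sp Sv \<and>
     (\<exists>\<delta>\<in>Sp. \<exists>\<sigma>\<in>Sv. \<exists>es. eps_valid X S Sp 0 es \<delta> \<sigma>) \<and>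
     (\<exists>\<delta>\<in>Sp. \<exists>\<sigma>\<in>Sv. valid X S Sp \<delta> \<sigma> \<and> \<not> verifier_leading_SE S Pr Sp Sv \<delta> \<sigma>) \<and>
     (\<exists>\<delta>\<in>Sp. \<exists>\<sigma>\<in>Sv. verifier_leading_SE S Pr Sp Sv \<delta> \<sigma> \<and> \<not> valid X S Sp \<delta> \<sigma>)"
proof (intro exI conjI bexI)
  let ?X = "{0, 1, 2} :: nat set" and ?honest = "\<lambda>x::nat. 0::nat"
  show "prob_decision_problem ?X {0} uniform_01"
    by (auto simp: prob_decision_problem_def set_pmf_uniform_01)
  show "adp_game ?X {0, 1} constant_provers example_verifiers"
    by (auto simp: adp_game_def constant_provers_def example_verifiers_def)
  show "eps_valid ?X {0} constant_provers 0 0 ?honest (return_pmf accept_message_0)"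
    by (auto simp: eps_valid_def vprob_return_pmf accept_message_0_def constant_provers_def)
  then show "valid ?X {0} constant_provers ?honest (return_pmf accept_message_0)"
    by (auto simp: valid_def)
  have "worst_loss_v {0} uniform_01 constant_provers (return_pmf accept_instance_0) = 0"
    by (rule worst_loss_v_example_eq_0)
      (auto simp: example_verifiers_def vprob_return_pmf accept_instance_0_def)
  then show "\<not> verifier_leading_SE {0} uniform_01 constant_provers example_verifiers
      ?honest (return_pmf accept_message_0)"
    by (intro not_verifier_leading_SE_if_better_verifier[of "return_pmf accept_instance_0"])
      (simp_all add: example_verifiers_def worst_loss_v_accept_message_0)
  have "worst_loss_v {0} uniform_01 constant_provers (return_pmf accept_instances_0_2) = 0"
    by (rule worst_loss_v_example_eq_0)
      (auto simp: example_verifiers_def vprob_return_pmf accept_instances_0_2_def)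
  then show "verifier_leading_SE {0} uniform_01 constant_provers example_verifiers
      ?honest (return_pmf accept_instances_0_2)"
    using best_responses_example[of "return_pmf accept_instances_0_2"]
    by (intro verifier_leading_SE_if_worst_loss_v_0)
      (simp_all add: example_verifiers_def constant_provers_def)
  show "\<not> valid ?X {0} constant_provers ?honest (return_pmf accept_instances_0_2)"
    by (auto simp: valid_def eps_valid_def vprob_return_pmf accept_instances_0_2_def
        constant_provers_def)
qed (auto simp: constant_provers_def example_verifiers_def)

end
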